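(* If $\mathfrak{p}=\mathfrak{c}$, then every almost disjoint family of size less than $\mathfrak{c}$ can be extended to a Shelah–Stepr\={a}ns MAD family.
   Context: An almost disjoint (AD) family is a family of infinite subsets of $\omega$ with pairwise finite intersections; MAD means maximal AD. $\mathcal{I}(\mathcal{A})$ is the ideal generated by $\mathcal{A}$ and the finite sets. For an ideal $\mathcal{I}$, $(\mathcal{I}^{<\omega})^+$ is the set of $X\subseteq[\omega]^{<\omega}\setminus\{\emptyset\}$ such that every $A\in\mathcal{I}$ is disjoint from some $s\in X$; $\mathcal{I}$ is Shelah–Stepr\={a}ns if for every $X\in(\mathcal{I}^{<\omega})^+$ there is an infinite $Y\subseteq X$ with $\bigcup Y\in\mathcal{I}$; $\mathcal{A}$ is Shelah–Stepr\={a}ns if $\mathcal{I}(\mathcal{A})$ is. $\mathfrak{p}$ is the pseudointersection number, $\mathfrak{c}=2^{\aleph_0}$. *)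

theory Defs
  imports Main
begin

definition almost_disjoint :: "nat set set \<Rightarrow> bool" where
  "almost_disjoint \<A> \<longleftrightarrow>
     (\<forall>a\<in>\<A>. infinite a) \<and> (\<forall>a\<in>\<A>. \<forall>b\<in>\<A>. a \<noteq> b \<longrightarrow> finite (a \<inter> b))"

definition MAD :: "nat set set \<Rightarrow> bool" where
  "MAD \<A> \<longleftrightarrow> almost_disjoint \<A> \<and>
     (\<forall>\<B>. almost_disjoint \<B> \<and> \<A> \<subseteq> \<B> \<longrightarrow> \<B> = \<A>)"

definition ideal_gen :: "nat set set \<Rightarrow> nat set set" where
  "ideal_gen \<A> = {X. \<exists>F. finite F \<and> F \<subseteq> \<A> \<and> finite (X - \<Union>F)}"

definition fin_pos :: "nat set set \<Rightarrow> nat set set set" where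
  "fin_pos I = {X. X \<subseteq> {s. finite s \<and> s \<noteq> {}} \<and> (\<forall>A\<in>I. \<exists>s\<in>X. A \<inter> s = {})}"

definition Shelah_Steprans_ideal :: "nat set set \<Rightarrow> bool" where
  "Shelah_Steprans_ideal I \<longleftrightarrow>
     (\<forall>X\<in>fin_pos I. \<exists>Y\<subseteq>X. infinite Y \<and> \<Union>Y \<in> I)"

definition Shelah_Steprans :: "nat set set \<Rightarrow> bool" where
  "Shelah_Steprans \<A> \<longleftrightarrow> Shelah_Steprans_ideal (ideal_gen \<A>)"

definition SFIP :: "nat set set \<Rightarrow> bool" where
  "SFIP \<F> \<longleftrightarrow> (\<forall>G. finite G \<and> G \<noteq> {} \<and> G \<subseteq> \<F> \<longrightarrow> infinite (\<Inter>G))"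

definition pseudointersection :: "nat set \<Rightarrow> nat set set \<Rightarrow> bool" where
  "pseudointersection B \<F> \<longleftrightarrow> infinite B \<and> (\<forall>F\<in>\<F>. finite (B - F))"

definition p_witness :: "nat set set \<Rightarrow> bool" where
  "p_witness \<F> \<longleftrightarrow> (\<forall>F\<in>\<F>. infinite F) \<and> SFIP \<F> \<and> \<not> (\<exists>B. pseudointersection B \<F>)"

text \<open>p = c: the least size of a witness family equals the continuum, i.e.
  every witness family has size at least c (p <= c holds in ZFC).\<close>
definition p_eq_c :: bool where
  "p_eq_c \<longleftrightarrow> (\<forall>\<F>. p_witness \<F> \<longrightarrow> (card_of (UNIV :: nat set set), card_of \<F>) \<in> ordLeq)"

end

(* Enumerate all subsets of omega along a cardinal well-order of size c (all of whose initial
   segments have size < c) and extend the given family along it, adding only finitely many sets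
   at each stage, so that every intermediate family has size < c. At stage t, the set t is added
   if it is almost disjoint from the current family P; moreover, if the family X of finite sets
   coded by t is positive for the ideal generated by P, the sets {s in X. s disjoint from a}, for
   a in P, are fewer than c = p sets with the strong finite intersection property. A
   pseudointersection Y of them is an infinite subfamily of X whose union is almost disjoint from
   every member of P, and that union is added. Both requirements persist to larger families, so
   the union of all stages is a MAD family that is Shelah-Steprans. *)
theory Submission
  imports Defs "HOL-Library.Nat_Bijection"
begin

unbundle cardinal_syntax

lemma infinite_UNIV_nat_set: "infinite (UNIV :: nat set set)"
  by (simp add: Finite_Set.finite_set)

lemma card_of_finite_ordLess_infinite: "finite A \<Longrightarrow> infinite B \<Longrightarrow> |A| <o |B|"
  by (rule finite_ordLess_infinite[OF card_of_Well_order card_of_Well_order])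
    (simp_all add: Field_card_of)

lemma card_of_UNION_finite_ordLess:
  assumes "infinite B" and "|I| <o |B|" and "\<forall>i\<in>I. finite (N i)"
  shows "|\<Union>(N ` I)| <o |B|"
proof (cases "finite I")
  case True
  then show ?thesis using assms by (blast intro: card_of_finite_ordLess_infinite)
next
  case False
  have "|\<Union>(N ` I)| \<le>o |I|"
  proof (rule card_of_UNION_ordLeq_infinite[OF False ordLeq_refl[OF card_of_Card_order] ballI])
    fix i assume "i \<in> I"
    then show "|N i| \<le>o |I|"
      using assms(3) False by (simp add: ordLess_imp_ordLeq card_of_finite_ordLess_infinite)
  qed
  then show ?thesis using assms(2) by (rule ordLeq_ordLess_trans)
qed

lemma almost_disjoint_subset: "almost_disjoint B \<Longrightarrow> A \<subseteq> B \<Longrightarrow> almost_disjoint A"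
  unfolding almost_disjoint_def by blast

lemma almost_disjoint_insert_iff:
  "almost_disjoint (insert U P) \<longleftrightarrow>
     almost_disjoint P \<and> infinite U \<and> (\<forall>a\<in>P. a \<noteq> U \<longrightarrow> finite (U \<inter> a))"
  unfolding almost_disjoint_def by (auto simp: Int_commute)

lemma almost_disjoint_Union_chain:
  assumes "chain\<^sub>\<subseteq> \<C>" and "\<forall>P\<in>\<C>. almost_disjoint P"
  shows "almost_disjoint (\<Union>\<C>)"
  unfolding almost_disjoint_def
proof (intro conjI ballI impI)
  fix a assume "a \<in> \<Union>\<C>"
  then obtain P where "P \<in> \<C>" "a \<in> P" by blast
  then show "infinite a" using assms(2) unfolding almost_disjoint_def by blast
next
  fix a b assume "a \<in> \<Union>\<C>" "b \<in> \<Union>\<C>" "a \<noteq> b"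
  then obtain P Q where PQ: "P \<in> \<C>" "Q \<in> \<C>" "a \<in> P" "b \<in> Q"
    by blast
  obtain R where "R \<in> \<C>" "a \<in> R" "b \<in> R"
  proof (cases "P \<subseteq> Q")
    case True
    then show thesis using PQ that by blast
  next
    case False
    then have "Q \<subseteq> P" using assms(1) PQ(1,2) unfolding chain_subset_def by blast
    then show thesis using PQ that by blast
  qed
  moreover have "almost_disjoint R" using assms(2) \<open>R \<in> \<C>\<close> by blast
  ultimately show "finite (a \<inter> b)"
    using \<open>a \<noteq> b\<close> unfolding almost_disjoint_def by blast
qed

lemma subset_ideal_gen: "P \<subseteq> ideal_gen P"
  unfolding ideal_gen_def by (auto intro!: exI[of _ "{_}"])

lemma ideal_gen_mono: "P \<subseteq> Q \<Longrightarrow> ideal_gen P \<subseteq> ideal_gen Q"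
  unfolding ideal_gen_def by blast

lemma fin_pos_antimono: "I \<subseteq> J \<Longrightarrow> fin_pos J \<subseteq> fin_pos I"
  unfolding fin_pos_def by blast

lemma SFIP_imp_infinite:
  assumes "SFIP \<F>" and "F \<in> \<F>"
  shows "infinite F"
proof -
  have "infinite (\<Inter>{F})"
    using assms unfolding SFIP_def
    by (metis empty_not_insert finite.simps insert_subsetI empty_subsetI)
  then show ?thesis by simp
qed

lemma p_eq_c_pseudointersection:
  assumes "p_eq_c" and "|\<F>| <o |UNIV :: nat set set|" and "SFIP \<F>"
  obtains B where "pseudointersection B \<F>"
proof -
  have "\<not> p_witness \<F>"
    using assms(1,2) not_ordLess_ordLeq unfolding p_eq_c_def by blast
  then show ?thesis
    using assms(3) SFIP_imp_infinite that unfolding p_witness_def by blast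
qed

lemma p_eq_c_pseudointersection_finite_sets:
  fixes \<X> :: "nat set set set"
  assumes "p_eq_c" and "|\<X>| <o |UNIV :: nat set set|"
    and finite_members: "\<And>X s. X \<in> \<X> \<Longrightarrow> s \<in> X \<Longrightarrow> finite s"
    and fip: "\<And>\<G>. finite \<G> \<Longrightarrow> \<G> \<noteq> {} \<Longrightarrow> \<G> \<subseteq> \<X> \<Longrightarrow> infinite (\<Inter>\<G>)"
  obtains Y where "infinite Y" and "\<forall>X\<in>\<X>. finite (Y - X)"
proof -
  have inj_encode: "inj_on set_encode S" if "\<forall>s\<in>S. finite s" for S :: "nat set set"
    using inj_on_subset[OF inj_on_set_encode] that by blast
  define \<F> where "\<F> = (\<lambda>X. set_encode ` X) ` \<X>"
  have "|\<F>| <o |UNIV :: nat set set|"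
    unfolding \<F>_def using card_of_image assms(2) by (rule ordLeq_ordLess_trans)
  moreover have "SFIP \<F>"
    unfolding SFIP_def
  proof (intro allI impI)
    fix G assume G: "finite G \<and> G \<noteq> {} \<and> G \<subseteq> \<F>"
    then obtain \<G> where \<G>: "\<G> \<subseteq> \<X>" "finite \<G>" "G = (\<lambda>X. set_encode ` X) ` \<G>"
      unfolding \<F>_def by (meson finite_subset_image)
    with G have "\<G> \<noteq> {}" by blast
    then have "\<forall>s\<in>\<Inter>\<G>. finite s" using \<G>(1) finite_members by blast
    then have "infinite (set_encode ` \<Inter>\<G>)"
      using fip[OF \<G>(2) \<open>\<G> \<noteq> {}\<close> \<G>(1)] inj_encode finite_image_iff by blast
    moreover have "set_encode ` \<Inter>\<G> \<subseteq> \<Inter>G" using \<G>(3) by blast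
    ultimately show "infinite (\<Inter>G)" using finite_subset by blast
  qed
  ultimately obtain B where B: "pseudointersection B \<F>"
    using p_eq_c_pseudointersection[OF \<open>p_eq_c\<close>] by blast
  show ?thesis
  proof
    have "inj set_decode" by (rule inj_on_inverseI[of _ set_encode]) simp
    then show "infinite (set_decode ` B)"
      using B unfolding pseudointersection_def by (simp add: finite_image_iff inj_on_subset)
  next
    show "\<forall>X\<in>\<X>. finite (set_decode ` B - X)"
    proof
      fix X assume "X \<in> \<X>"
      then have "finite (B - set_encode ` X)"
        using B unfolding pseudointersection_def \<F>_def by blast
      moreover have "set_decode ` B - X \<subseteq> set_decode ` (B - set_encode ` X)"
        using finite_members[OF \<open>X \<in> \<X>\<close>] by auto
      ultimately show "finite (set_decode ` B - X)" by (meson finite_imageI finite_subset)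
    qed
  qed
qed

lemma fin_pos_avoiding_infinite:
  assumes X: "X \<in> fin_pos (ideal_gen P)" and "finite F" and "F \<subseteq> P"
  shows "infinite {s \<in> X. \<forall>a\<in>F. s \<inter> a = {}}" (is "infinite ?S")
proof
  assume "finite ?S"
  then have "finite (\<Union>?S)" using X unfolding fin_pos_def by auto
  then have "\<Union>F \<union> \<Union>?S \<in> ideal_gen P"
    unfolding ideal_gen_def using assms(2,3) by (auto intro!: exI[of _ F] elim: rev_finite_subset)
  then obtain s where s: "s \<in> X" "(\<Union>F \<union> \<Union>?S) \<inter> s = {}"
    using X unfolding fin_pos_def by blast
  then have "s \<in> ?S" by blast
  then have "s \<subseteq> \<Union>?S" by blast
  moreover have "s \<noteq> {}" using X s(1) unfolding fin_pos_def by blast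
  ultimately show False using s(2) by blast
qed

lemma fin_pos_almost_disjoint_Union:
  assumes "p_eq_c" and small: "|P| <o |UNIV :: nat set set|" and X: "X \<in> fin_pos (ideal_gen P)"
  obtains Y where "Y \<subseteq> X" and "infinite Y" and "\<And>a. a \<in> P \<Longrightarrow> finite (\<Union>Y \<inter> a)"
proof -
  define avoiding where "avoiding a = {s \<in> X. s \<inter> a = {}}" for a
  define \<X> where "\<X> = insert X (avoiding ` P)"
  have finite_member: "finite s" if "s \<in> X" for s
    using X that unfolding fin_pos_def by blast
  have "|{X}| <o |UNIV :: nat set set|"
    by (simp add: card_of_finite_ordLess_infinite infinite_UNIV_nat_set)
  moreover have "|avoiding ` P| <o |UNIV :: nat set set|"
    using card_of_image small by (rule ordLeq_ordLess_trans)
  ultimately have "|{X} \<union> avoiding ` P| <o |UNIV :: nat set set|"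
    by (rule card_of_Un_ordLess_infinite[OF infinite_UNIV_nat_set])
  then have "|\<X>| <o |UNIV :: nat set set|"
    unfolding \<X>_def by simp
  moreover have "finite s" if "Z \<in> \<X>" "s \<in> Z" for Z s
  proof -
    have "Z \<subseteq> X" using \<open>Z \<in> \<X>\<close> unfolding \<X>_def avoiding_def by blast
    then show ?thesis using finite_member \<open>s \<in> Z\<close> by blast
  qed
  moreover have "infinite (\<Inter>\<G>)" if "finite \<G>" "\<G> \<noteq> {}" "\<G> \<subseteq> \<X>" for \<G>
  proof -
    have "finite (\<G> - {X})" "\<G> - {X} \<subseteq> avoiding ` P"
      using that(1,3) unfolding \<X>_def by blast+
    then obtain F where F: "F \<subseteq> P" "finite F" "\<G> - {X} = avoiding ` F"
      by (rule finite_subset_image[elim_format]) blast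
    have "{s \<in> X. \<forall>a\<in>F. s \<inter> a = {}} \<subseteq> \<Inter>\<G>"
    proof
      fix s assume "s \<in> {s \<in> X. \<forall>a\<in>F. s \<inter> a = {}}"
      moreover have "G = X \<or> (\<exists>a\<in>F. G = avoiding a)" if "G \<in> \<G>" for G
        using that F(3) by blast
      ultimately show "s \<in> \<Inter>\<G>" unfolding avoiding_def by blast
    qed
    then show ?thesis using fin_pos_avoiding_infinite[OF X F(2,1)] finite_subset by blast
  qed
  ultimately obtain Y where Y: "infinite Y" "\<forall>Z\<in>\<X>. finite (Y - Z)"
    by (rule p_eq_c_pseudointersection_finite_sets[OF \<open>p_eq_c\<close>])
  show ?thesis
  proof
    show "Y \<inter> X \<subseteq> X" by blast
    have "Y \<inter> X = Y - (Y - X)" by blast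
    then show "infinite (Y \<inter> X)" using Y \<X>_def by (simp add: Diff_infinite_finite)
  next
    fix a assume "a \<in> P"
    have "\<Union>(Y \<inter> X) \<inter> a \<subseteq> \<Union>(Y \<inter> X - avoiding a)"
      unfolding avoiding_def by blast
    moreover have "finite (Y \<inter> X - avoiding a)"
      using Y(2) \<open>a \<in> P\<close> unfolding \<X>_def by (blast intro: finite_subset)
    ultimately show "finite (\<Union>(Y \<inter> X) \<inter> a)"
      using finite_member by (meson Diff_subset finite_Union finite_subset inf_le2 subsetD)
  qed
qed

(* t is read twice: as a candidate member of the MAD family, and via set_decode as the code of a
   family of finite sets (every such family X equals set_decode ` set_encode ` X). A single
   enumeration of all t therefore takes care of both maximality and the Shelah-Steprans property. *)
definition settles :: "nat set set \<Rightarrow> nat set \<Rightarrow> bool" where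
  "settles \<Q> t \<longleftrightarrow>
     (almost_disjoint (insert t \<Q>) \<longrightarrow> t \<in> \<Q>) \<and>
     (set_decode ` t \<in> fin_pos (ideal_gen \<Q>) \<longrightarrow>
        (\<exists>Y\<subseteq>set_decode ` t. infinite Y \<and> \<Union>Y \<in> ideal_gen \<Q>))"

lemma settles_mono:
  assumes "settles \<Q> t" and "\<Q> \<subseteq> \<Q>'"
  shows "settles \<Q>' t"
proof -
  have "almost_disjoint (insert t \<Q>') \<longrightarrow> t \<in> \<Q>'"
    using assms almost_disjoint_subset[of "insert t \<Q>'" "insert t \<Q>"]
    unfolding settles_def by blast
  moreover have "fin_pos (ideal_gen \<Q>') \<subseteq> fin_pos (ideal_gen \<Q>)"
    and "ideal_gen \<Q> \<subseteq> ideal_gen \<Q>'"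
    using assms(2) by (simp_all add: fin_pos_antimono ideal_gen_mono)
  ultimately show ?thesis using assms(1) unfolding settles_def by blast
qed

lemma almost_disjoint_extension_deciding:
  assumes "almost_disjoint P"
  obtains Q where "P \<subseteq> Q" and "Q \<subseteq> insert t P" and "almost_disjoint Q"
    and "\<And>Q'. Q \<subseteq> Q' \<Longrightarrow> almost_disjoint (insert t Q') \<Longrightarrow> t \<in> Q'"
proof (cases "almost_disjoint (insert t P)")
  case True
  show ?thesis
    by (rule that[of "insert t P"]) (use True in auto)
next
  case False
  show ?thesis
  proof (rule that[of P])
    fix Q' assume "P \<subseteq> Q'" and "almost_disjoint (insert t Q')"
    then have "almost_disjoint (insert t P)"
      by (meson almost_disjoint_subset insert_mono)
    with False show "t \<in> Q'" by contradiction
  qed (use assms in auto)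
qed

lemma almost_disjoint_extension_absorbing:
  assumes "p_eq_c" and "almost_disjoint P" and "|P| <o |UNIV :: nat set set|"
  obtains Q where "P \<subseteq> Q" and "finite (Q - P)" and "almost_disjoint Q"
    and "X \<in> fin_pos (ideal_gen Q) \<Longrightarrow> \<exists>Y\<subseteq>X. infinite Y \<and> \<Union>Y \<in> ideal_gen Q"
proof (cases "X \<in> fin_pos (ideal_gen P)")
  case True
  then obtain Y where Y: "Y \<subseteq> X" "infinite Y" "\<And>a. a \<in> P \<Longrightarrow> finite (\<Union>Y \<inter> a)"
    using fin_pos_almost_disjoint_Union assms(1,3) by blast
  have "almost_disjoint (insert (\<Union>Y) P)"
    using assms(2) Y(2,3) by (simp add: almost_disjoint_insert_iff) (meson finite_UnionD)
  moreover have "\<Union>Y \<in> ideal_gen (insert (\<Union>Y) P)"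
    using subset_ideal_gen by blast
  ultimately show ?thesis
    by (intro that[of "insert (\<Union>Y) P"]) (use Y(1,2) in \<open>auto simp: insert_Diff_if\<close>)
next
  case False
  then show ?thesis
    by (intro that[of P]) (use assms(2) in auto)
qed

lemma settles_finite_extension:
  assumes "p_eq_c" and "almost_disjoint P" and small: "|P| <o |UNIV :: nat set set|"
  obtains N where "finite N" and "almost_disjoint (P \<union> N)" and "settles (P \<union> N) t"
proof -
  obtain Q where Q: "P \<subseteq> Q" "Q \<subseteq> insert t P" "almost_disjoint Q"
    and decided: "\<And>Q'. Q \<subseteq> Q' \<Longrightarrow> almost_disjoint (insert t Q') \<Longrightarrow> t \<in> Q'"
    using almost_disjoint_extension_deciding[OF assms(2), of t] by blast
  have "|{t} \<union> P| <o |UNIV :: nat set set|"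
    by (rule card_of_Un_ordLess_infinite[OF infinite_UNIV_nat_set _ small])
      (simp add: card_of_finite_ordLess_infinite infinite_UNIV_nat_set)
  moreover have "|Q| \<le>o |{t} \<union> P|"
    using Q(2) by (simp add: card_of_mono1)
  ultimately have "|Q| <o |UNIV :: nat set set|"
    using ordLeq_ordLess_trans by blast
  then obtain Q' where Q': "Q \<subseteq> Q'" "finite (Q' - Q)" "almost_disjoint Q'"
    "set_decode ` t \<in> fin_pos (ideal_gen Q') \<Longrightarrow>
       \<exists>Y\<subseteq>set_decode ` t. infinite Y \<and> \<Union>Y \<in> ideal_gen Q'"
    using almost_disjoint_extension_absorbing[OF \<open>p_eq_c\<close> Q(3)] by blast
  show ?thesis
  proof
    show "finite (Q' - P)"
      using Q(2) Q'(2) by (blast intro: finite_subset[of _ "insert t (Q' - Q)"])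
    show "almost_disjoint (P \<union> (Q' - P))" "settles (P \<union> (Q' - P)) t"
      using Q(1) Q' decided unfolding settles_def by (simp_all add: Un_absorb1 subset_trans)
  qed
qed

lemma (in wo_rel) exists_underS_recursive_fun: "\<exists>f. \<forall>a. f a = H a (f ` underS a)"
proof -
  define H' where "H' f a = H a (f ` underS a)" for f a
  have "adm_wo H'"
    unfolding adm_wo_def
  proof (intro allI impI)
    fix f g :: "'a \<Rightarrow> 'b" and a
    assume "\<forall>b\<in>underS a. f b = g b"
    then have "f ` underS a = g ` underS a" by (intro image_cong) simp_all
    then show "H' f a = H' g a" unfolding H'_def by simp
  qed
  then have "worec H' a = H' (worec H') a" for a
    by (simp flip: worec_fixpoint)
  then show ?thesis unfolding H'_def by blast
qed

lemma exists_settling_almost_disjoint_extension: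
  assumes "p_eq_c" and "almost_disjoint \<A>" and small: "|\<A>| <o |UNIV :: nat set set|"
  obtains \<B> where "\<A> \<subseteq> \<B>" and "almost_disjoint \<B>" and "\<And>t. settles \<B> t"
proof -
  let ?r = "|UNIV :: nat set set|"
  interpret wo_rel ?r by (simp add: wo_rel_def card_of_Well_order)
  define extend where
    "extend P t = (SOME N. finite N \<and> almost_disjoint (P \<union> N) \<and> settles (P \<union> N) t)" for P t
  obtain N where N: "\<And>t. N t = extend (\<A> \<union> \<Union>(N ` underS t)) t"
    using exists_underS_recursive_fun[of "\<lambda>t S. extend (\<A> \<union> \<Union>S) t"] by blast
  define stage where "stage t = \<A> \<union> \<Union>(N ` underS t)" for t
  have stage_grows: "stage t \<union> N t \<subseteq> stage u" if "t \<in> underS u" for t u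
  proof -
    have "(t, u) \<in> ?r" using that unfolding underS_def by blast
    then have "underS t \<subseteq> underS u" by (rule underS_incr[OF TRANS ANTISYM])
    then show ?thesis using that unfolding stage_def by blast
  qed
  have chain: "chain\<^sub>\<subseteq> (insert \<A> ((\<lambda>t. stage t \<union> N t) ` T))" for T
  proof -
    have "stage t \<union> N t \<subseteq> stage u \<union> N u \<or> stage u \<union> N u \<subseteq> stage t \<union> N t" for t u
    proof (cases "t = u")
      case False
      then have "t \<in> underS u \<or> u \<in> underS t"
        using TOTALS unfolding underS_def Field_card_of by blast
      then show ?thesis using stage_grows by blast
    qed simp
    moreover have "\<A> \<subseteq> stage t \<union> N t" for t unfolding stage_def by blast
    ultimately show ?thesis unfolding chain_subset_def by auto
  qed
  have stage_step:
    "finite (N t) \<and> almost_disjoint (stage t \<union> N t) \<and> settles (stage t \<union> N t) t" for t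
  proof (induction t rule: well_order_induct)
    case (1 t)
    then have IH: "finite (N u) \<and> almost_disjoint (stage u \<union> N u)" if "u \<in> underS t" for u
      using that unfolding underS_def by blast
    have "almost_disjoint (\<Union>(insert \<A> ((\<lambda>u. stage u \<union> N u) ` underS t)))"
      using chain IH assms(2) by (blast intro: almost_disjoint_Union_chain)
    then have "almost_disjoint (stage t)"
      by (rule almost_disjoint_subset) (auto simp: stage_def)
    moreover have "|stage t| <o |UNIV :: nat set set|"
    proof -
      have "|underS t| <o ?r"
        by (rule card_of_underS[OF card_of_Card_order]) (simp add: Field_card_of)
      then show ?thesis
        unfolding stage_def using IH
        by (intro card_of_Un_ordLess_infinite[OF infinite_UNIV_nat_set small]
            card_of_UNION_finite_ordLess[OF infinite_UNIV_nat_set]) auto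
    qed
    ultimately have "\<exists>M. finite M \<and> almost_disjoint (stage t \<union> M) \<and> settles (stage t \<union> M) t"
      using settles_finite_extension[OF \<open>p_eq_c\<close>] by blast
    then have "finite (extend (stage t) t) \<and> almost_disjoint (stage t \<union> extend (stage t) t) \<and>
        settles (stage t \<union> extend (stage t) t) t"
      unfolding extend_def by (rule someI_ex)
    moreover have "N t = extend (stage t) t"
      using N[of t] unfolding stage_def .
    ultimately show ?case by simp
  qed
  show ?thesis
  proof (rule that)
    let ?\<B> = "\<Union>(insert \<A> (range (\<lambda>t. stage t \<union> N t)))"
    show "\<A> \<subseteq> ?\<B>" by blast
    show "almost_disjoint ?\<B>"
      by (rule almost_disjoint_Union_chain[OF chain]) (use stage_step assms(2) in blast)
    show "settles ?\<B> t" for t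
      by (rule settles_mono[of "stage t \<union> N t"]) (use stage_step in blast)+
  qed
qed

lemma MAD_if_settles:
  assumes "almost_disjoint \<B>" and "\<And>t. settles \<B> t"
  shows "MAD \<B>"
  unfolding MAD_def
proof (intro conjI allI impI)
  fix \<C> assume \<C>: "almost_disjoint \<C> \<and> \<B> \<subseteq> \<C>"
  have "t \<in> \<B>" if "t \<in> \<C>" for t
  proof -
    have "almost_disjoint (insert t \<B>)"
      using \<C> that almost_disjoint_subset by blast
    then show ?thesis using assms(2)[of t] unfolding settles_def by blast
  qed
  then show "\<C> = \<B>" using \<C> by blast
qed (rule assms(1))

lemma Shelah_Steprans_if_settles:
  assumes "\<And>t. settles \<B> t"
  shows "Shelah_Steprans \<B>"
  unfolding Shelah_Steprans_def Shelah_Steprans_ideal_def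
proof
  fix X assume X: "X \<in> fin_pos (ideal_gen \<B>)"
  then have "set_decode ` set_encode ` X = X"
    unfolding fin_pos_def image_image by (simp add: subset_eq)
  then show "\<exists>Y\<subseteq>X. infinite Y \<and> \<Union>Y \<in> ideal_gen \<B>"
    using X assms[of "set_encode ` X"] unfolding settles_def by simp
qed

theorem mainTheorem9:
  assumes "p_eq_c"
    and "almost_disjoint \<A>"
    and "(card_of \<A>, card_of (UNIV :: nat set set)) \<in> ordLess"
  shows "\<exists>\<B>. \<A> \<subseteq> \<B> \<and> MAD \<B> \<and> Shelah_Steprans \<B>"
proof -
  obtain \<B> where "\<A> \<subseteq> \<B>" "almost_disjoint \<B>" "\<And>t. settles \<B> t"
    using exists_settling_almost_disjoint_extension assms by blast
  then show ?thesis using MAD_if_settles Shelah_Steprans_if_settles by blast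
qed

end
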